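(* Let $n\ge 1$, $d=2$, and for every $i\in[n]$ let $f_i(x)=\|x\|_1$, so that $f(x)=\|x\|_1$ and $\min_x f(x)=0$. Let $\gamma\ge 0$, $x^0=(\gamma/2,\,-1)^\top$ and $v_i^0=(1,1)^\top$ for all $i$. Consider the EF21 method $$x^{t+1}=x^t-\gamma v^t,\quad v^t=\frac1n\sum_{i=1}^n v_i^t,\qquad v_i^{t+1}=v_i^t+\mathcal C\big(f_i'(x^{t+1})-v_i^t\big),\quad f_i'(x^{t+1})\in\partial f_i(x^{t+1}),$$ with $\mathcal C$ the Top-$1$ compressor. Then for every $t\ge 0$, $$f(x^t)-\min_{x\in\mathbb R^2} f(x)=1+\frac{\gamma}{2}+t\gamma .$$
   Context: The Top-$1$ compressor $\mathcal C:\mathbb R^2\to\mathbb R^2$ keeps the coordinate of largest absolute value and sets the other coordinate to zero; when both coordinates have equal absolute value it keeps the first coordinate. $\partial f_i(x)$ denotes the convex subdifferential. *)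

theory Defs
  imports "HOL-Analysis.Analysis"
begin

definition l1norm :: "real \<times> real \<Rightarrow> real" where
  "l1norm x = \<bar>fst x\<bar> + \<bar>snd x\<bar>"

definition subdiff :: "(real \<times> real \<Rightarrow> real) \<Rightarrow> real \<times> real \<Rightarrow> (real \<times> real) set" where
  "subdiff f x = {g. \<forall>y. f y \<ge> f x + inner g (y - x)}"

definition top1 :: "real \<times> real \<Rightarrow> real \<times> real" where
  "top1 x = (if \<bar>fst x\<bar> \<ge> \<bar>snd x\<bar> then (fst x, 0) else (0, snd x))"

end

theory Submission
  imports Defs
begin

text \<open>When \<open>\<gamma> > 0\<close>, all local estimators stay equal, and the iterates and the averaged estimator
alternate as \<open>x\<^sup>t = ((-1)\<^sup>t \<gamma>/2, -1 - t\<gamma>)\<close> and \<open>v\<^sup>t = ((-1)\<^sup>t, 1)\<close>: both coordinates of \<open>x\<^sup>t\<^sup>+\<^sup>1\<close>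
are nonzero, so the subgradient is the sign vector \<open>(-(-1)\<^sup>t, -1)\<close>, and Top-1 applied to
\<open>(-2(-1)\<^sup>t, -2)\<close> keeps only the first coordinate (ties go to the first), which flips the first
entry of \<open>v\<close> but leaves the second one at \<open>1\<close>. Hence the second coordinate of \<open>x\<close> drifts away
from the minimiser by \<open>\<gamma>\<close> per step.\<close>

lemma abs_subgradient_eq_sgn:
  fixes a c :: real
  assumes sub: "\<And>y. \<bar>y\<bar> \<ge> \<bar>a\<bar> + c * (y - a)" and "a \<noteq> 0"
  shows "c = sgn a"
proof -
  have "c * a \<le> \<bar>a\<bar>" "c * a \<ge> \<bar>a\<bar>"
    using sub[of "2 * a"] sub[of 0] by (simp_all add: algebra_simps)
  then have "c * a = sgn a * a"
    by (metis abs_sgn antisym mult.commute)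
  then show ?thesis
    using \<open>a \<noteq> 0\<close> by simp
qed

lemma subdiff_l1norm_eq_sgn:
  assumes "g \<in> subdiff l1norm (a, b)" "a \<noteq> 0" "b \<noteq> 0"
  shows "g = (sgn a, sgn b)"
proof -
  have sub: "l1norm y \<ge> l1norm (a, b) + inner g (y - (a, b))" for y
    using assms(1) unfolding subdiff_def by blast
  have "fst g = sgn a"
    by (rule abs_subgradient_eq_sgn[OF _ \<open>a \<noteq> 0\<close>])
       (use sub[of "(_, b)"] in \<open>simp add: l1norm_def inner_prod_def\<close>)
  moreover have "snd g = sgn b"
    by (rule abs_subgradient_eq_sgn[OF _ \<open>b \<noteq> 0\<close>])
       (use sub[of "(a, _)"] in \<open>simp add: l1norm_def inner_prod_def\<close>)
  ultimately show ?thesis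
    by (simp add: prod_eq_iff)
qed

lemma INF_l1norm: "(INF y. l1norm y) = 0"
proof (rule antisym)
  have "bdd_below (range l1norm)"
    by (intro bdd_belowI[of _ 0]) (auto simp: l1norm_def)
  then have "(INF y. l1norm y) \<le> l1norm 0"
    by (rule cINF_lower) simp
  then show "(INF y. l1norm y) \<le> 0"
    by (simp add: l1norm_def)
  show "0 \<le> (INF y. l1norm y)"
    by (rule cINF_greatest) (auto simp: l1norm_def)
qed

lemma top1_step_flips_first:
  fixes s :: real
  assumes "\<bar>s\<bar> = 1"
  shows "(s, 1) + top1 ((-s, -1) - (s, 1)) = (-s, 1)"
  using assms by (simp add: top1_def)

definition zigzag :: "real \<Rightarrow> nat \<Rightarrow> real \<times> real" where
  "zigzag \<gamma> t = ((-1) ^ t * \<gamma> / 2, -1 - real t * \<gamma>)"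

lemma zigzag_Suc: "zigzag \<gamma> (Suc t) = zigzag \<gamma> t - \<gamma> *\<^sub>R ((-1) ^ t, 1)"
  by (simp add: zigzag_def algebra_simps)

lemma l1norm_zigzag:
  assumes "\<gamma> \<ge> 0"
  shows "l1norm (zigzag \<gamma> t) = 1 + \<gamma> / 2 + real t * \<gamma>"
proof -
  have "\<bar>-1 - real t * \<gamma>\<bar> = 1 + real t * \<gamma>"
    using assms mult_nonneg_nonneg[of "real t" \<gamma>] by linarith
  then show ?thesis
    using assms by (simp add: zigzag_def l1norm_def abs_mult power_abs)
qed

lemma subdiff_l1norm_zigzag_Suc:
  assumes "\<gamma> > 0" "g \<in> subdiff l1norm (zigzag \<gamma> (Suc t))"
  shows "g = (- ((-1) ^ t), -1)"
proof -
  have "- 1 - real (Suc t) * \<gamma> < 0"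
    using assms(1) by (smt (verit) mult_nonneg_nonneg of_nat_0_le_iff)
  with assms show ?thesis
    using subdiff_l1norm_eq_sgn[of g "(-1) ^ Suc t * \<gamma> / 2" "- 1 - real (Suc t) * \<gamma>"]
    by (simp add: zigzag_def sgn_mult)
qed

lemma ef21_l1norm_trajectory:
  fixes x :: "nat \<Rightarrow> real \<times> real" and v g :: "nat \<Rightarrow> nat \<Rightarrow> real \<times> real"
  assumes n: "n \<ge> 1" and gam: "\<gamma> \<ge> 0"
    and x0: "x 0 = (\<gamma> / 2, -1)"
    and v0: "\<forall>i\<in>{1..n}. v i 0 = (1, 1)"
    and xstep: "\<forall>t. x (Suc t) = x t - \<gamma> *\<^sub>R ((1 / real n) *\<^sub>R (\<Sum>i=1..n. v i t))"
    and gsub: "\<forall>t. \<forall>i\<in>{1..n}. g i (Suc t) \<in> subdiff l1norm (x (Suc t))"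
    and vstep: "\<forall>t. \<forall>i\<in>{1..n}. v i (Suc t) = v i t + top1 (g i (Suc t) - v i t)"
  shows "x t = zigzag \<gamma> t"
proof (cases "\<gamma> = 0")
  case True
  then show ?thesis
    using x0 xstep by (induction t) (simp_all add: zigzag_def)
next
  case False
  with gam have "\<gamma> > 0" by simp
  have "x t = zigzag \<gamma> t \<and> (\<forall>i\<in>{1..n}. v i t = ((-1) ^ t, 1))"
  proof (induction t)
    case 0
    then show ?case using x0 v0 by (simp add: zigzag_def)
  next
    case (Suc t)
    then have average: "(1 / real n) *\<^sub>R (\<Sum>i=1..n. v i t) = ((-1) ^ t, 1)"
      using n by (simp add: sum_constant_scaleR)
    have x_Suc: "x (Suc t) = zigzag \<gamma> (Suc t)"
      using xstep[rule_format, of t] Suc.IH unfolding average zigzag_Suc by simp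
    have "v i (Suc t) = ((-1) ^ Suc t, 1)" if i: "i \<in> {1..n}" for i
    proof -
      have "g i (Suc t) = (- ((-1) ^ t), -1)"
        using subdiff_l1norm_zigzag_Suc[OF \<open>\<gamma> > 0\<close>] gsub i x_Suc by metis
      then show ?thesis
        using vstep Suc.IH i top1_step_flips_first[of "(-1) ^ t"] by simp
    qed
    with x_Suc show ?case by blast
  qed
  then show ?thesis by blast
qed

theorem mainTheorem2:
  fixes n :: nat and \<gamma> :: real
    and f :: "nat \<Rightarrow> real \<times> real \<Rightarrow> real"
    and x :: "nat \<Rightarrow> real \<times> real"
    and v :: "nat \<Rightarrow> nat \<Rightarrow> real \<times> real"
    and g :: "nat \<Rightarrow> nat \<Rightarrow> real \<times> real"
  assumes n: "n \<ge> 1"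
    and fi: "\<forall>i\<in>{1..n}. f i = l1norm"
    and gam: "\<gamma> \<ge> 0"
    and x0: "x 0 = (\<gamma> / 2, -1)"
    and v0: "\<forall>i\<in>{1..n}. v i 0 = (1, 1)"
    and xstep: "\<forall>t. x (Suc t) = x t - \<gamma> *\<^sub>R ((1 / real n) *\<^sub>R (\<Sum>i=1..n. v i t))"
    and gsub: "\<forall>t. \<forall>i\<in>{1..n}. g i (Suc t) \<in> subdiff (f i) (x (Suc t))"
    and vstep: "\<forall>t. \<forall>i\<in>{1..n}. v i (Suc t) = v i t + top1 (g i (Suc t) - v i t)"
  shows "\<forall>t. (\<lambda>y. (1 / real n) * (\<Sum>i=1..n. f i y)) (x t)
              - (INF y. (1 / real n) * (\<Sum>i=1..n. f i y))
            = 1 + \<gamma> / 2 + real t * \<gamma>"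
proof -
  have average: "(1 / real n) * (\<Sum>i=1..n. f i y) = l1norm y" for y
    using n fi by simp
  have "x t = zigzag \<gamma> t" for t
    using gsub fi by (intro ef21_l1norm_trajectory[OF n gam x0 v0 xstep _ vstep]) simp
  then show ?thesis
    unfolding average INF_l1norm using l1norm_zigzag[OF gam] by simp
qed

end
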